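(* Let $c$ be a prefix equivariant statistic and $\theta>0$. Let $2\le k\le N$. If the increasing prefix $e_k=12\cdots k$ is negative, then the increasing prefix $e_{k-1}=12\cdots(k-1)$ is negative.
   Context: Permutations of $\{1,\dots,m\}$ are written in one-line notation; $\mathfrak S_m$ is the set of all of them. Fix $N\ge1$, a statistic $c:\bigcup_{m=1}^N\mathfrak S_m\to\mathbb Z_{\ge0}$ and a real $\theta>0$. Prefixes and containment: - A prefix is an element of $\bigcup_{m=1}^N\mathfrak S_m$. - $\pi^{(i)}\in\mathfrak S_i$ denotes the unique permutation with the same relative order as $\pi_1,\dots,\pi_i$. - A prefix $r\in\mathfrak S_n$ contains $p\in\mathfrak S_m$ if $r^{(m)}=p$. - For $p\in\mathfrak S_m$ and $\pi\in\mathfrak S_N$: $\pi$ is $p$-prefixed if $\pi^{(m)}=p$, and $p$-winnable if moreover $\pi_m=N$. Probabilities: - $D(p)=\sum_{p\text{-prefixed }\pi}\theta^{c(\pi)}$. - $S(p)=\big(\sum_{p\text{-winnable }\pi}\theta^{c(\pi)}\big)/D(p)$. - $S^c(p)=0$ for $p\in\mathfrak S_N$; for $p\in\mathfrak S_m$ with $m<N$, $S^c(p)=\big(\sum_{q'\in\mathfrak S_{m+1}\text{ containing }p}D(q')\bar S(q')\big)/D(p)$. - $\bar S(p)=\max(S(p),S^c(p))$. - $p$ is positive if $S(p)\ge S^c(p)$, and negative otherwise. Let $e_k=12\cdots k$. For $q\in\mathfrak S_k$ and $\pi\in\mathfrak S_m$ with $\pi_1<\cdots<\pi_k$, $\sigma_q\cdot\pi$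 is given by $(\sigma_q\cdot\pi)_i=\pi_{q_i}$ for $i\le k$ and $(\sigma_q\cdot\pi)_i=\pi_i$ for $i>k$. The statistic $c$ is prefix equivariant if $c(\pi)-c(\sigma_q\cdot\pi)=c(e_k)-c(q)$ for all $k\le m\le N$, all $q\in\mathfrak S_k$, and all $\pi\in\mathfrak S_m$ with $\pi_1<\cdots<\pi_k$. *)

theory Defs
  imports Complex_Main
begin

definition perms :: "nat \<Rightarrow> nat list set" where
  "perms m = {xs. length xs = m \<and> distinct xs \<and> set xs = {1..m}}"

definition std :: "nat list \<Rightarrow> nat list" where
  "std xs = map (\<lambda>x. card {y \<in> set xs. y \<le> x}) xs"

definition pat :: "nat \<Rightarrow> nat list \<Rightarrow> nat list" where
  "pat i xs = std (take i xs)"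

definition inc :: "nat \<Rightarrow> nat list" where
  "inc k = [1..<Suc k]"

definition Dw :: "nat \<Rightarrow> (nat list \<Rightarrow> nat) \<Rightarrow> real \<Rightarrow> nat list \<Rightarrow> real" where
  "Dw N c \<theta> p = (\<Sum>\<pi>\<in>{\<pi> \<in> perms N. pat (length p) \<pi> = p}. \<theta> ^ c \<pi>)"

text \<open>S(p): probability of success when stopping at p.\<close>
definition Sw :: "nat \<Rightarrow> (nat list \<Rightarrow> nat) \<Rightarrow> real \<Rightarrow> nat list \<Rightarrow> real" where
  "Sw N c \<theta> p = (\<Sum>\<pi>\<in>{\<pi> \<in> perms N. pat (length p) \<pi> = p \<and> \<pi> ! (length p - 1) = N}. \<theta> ^ c \<pi>)
                   / Dw N c \<theta> p"

text \<open>Continuation value given the optimal values f of the one-step extensions.\<close>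
definition Scont :: "nat \<Rightarrow> (nat list \<Rightarrow> nat) \<Rightarrow> real \<Rightarrow> (nat list \<Rightarrow> real) \<Rightarrow> nat list \<Rightarrow> real" where
  "Scont N c \<theta> f p = (\<Sum>q\<in>{q \<in> perms (Suc (length p)). pat (length p) q = p}. Dw N c \<theta> q * f q)
                       / Dw N c \<theta> p"

primrec SbarR :: "nat \<Rightarrow> nat \<Rightarrow> (nat list \<Rightarrow> nat) \<Rightarrow> real \<Rightarrow> nat list \<Rightarrow> real" where
  "SbarR 0 N c \<theta> p = max (Sw N c \<theta> p) 0"
| "SbarR (Suc j) N c \<theta> p = max (Sw N c \<theta> p) (Scont N c \<theta> (SbarR j N c \<theta>) p)"

definition Sbar :: "nat \<Rightarrow> (nat list \<Rightarrow> nat) \<Rightarrow> real \<Rightarrow> nat list \<Rightarrow> real" where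
  "Sbar N c \<theta> p = SbarR (N - length p) N c \<theta> p"

definition Sc :: "nat \<Rightarrow> (nat list \<Rightarrow> nat) \<Rightarrow> real \<Rightarrow> nat list \<Rightarrow> real" where
  "Sc N c \<theta> p = (if length p < N then Scont N c \<theta> (Sbar N c \<theta>) p else 0)"

definition positive_prefix :: "nat \<Rightarrow> (nat list \<Rightarrow> nat) \<Rightarrow> real \<Rightarrow> nat list \<Rightarrow> bool" where
  "positive_prefix N c \<theta> p \<longleftrightarrow> Sw N c \<theta> p \<ge> Sc N c \<theta> p"

definition negative_prefix :: "nat \<Rightarrow> (nat list \<Rightarrow> nat) \<Rightarrow> real \<Rightarrow> nat list \<Rightarrow> bool" where
  "negative_prefix N c \<theta> p \<longleftrightarrow> Sw N c \<theta> p < Sc N c \<theta> p"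

definition sigma_act :: "nat list \<Rightarrow> nat list \<Rightarrow> nat list" where
  "sigma_act q \<pi> = map (\<lambda>i. \<pi> ! (i - 1)) q @ drop (length q) \<pi>"

definition prefix_equivariant :: "nat \<Rightarrow> (nat list \<Rightarrow> nat) \<Rightarrow> bool" where
  "prefix_equivariant N c \<longleftrightarrow>
     (\<forall>k m q \<pi>. 1 \<le> k \<longrightarrow> k \<le> m \<longrightarrow> m \<le> N \<longrightarrow> q \<in> perms k \<longrightarrow> \<pi> \<in> perms m \<longrightarrow>
        sorted_wrt (<) (take k \<pi>) \<longrightarrow>
        int (c \<pi>) - int (c (sigma_act q \<pi>)) = int (c (inc k)) - int (c q))"

end

theory Submission
  imports Defs "HOL-Library.Multiset"
begin

text \<open>
  Prefix equivariance says that rearranging the increasing first k entries of a permutation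
  by q \<in> \<frak>S_k multiplies its weight by \<theta>^(c(q) - c(e_k)). Hence \<sigma>_q maps the t-prefixed
  permutations bijectively onto the (\<sigma>_q t)-prefixed ones, scaling all weights by one common
  factor, whenever t begins with k increasing entries. So S, and by induction on the remaining
  length also S-bar and S^c, are unchanged by \<sigma>_q; in particular S^c(q) = S^c(e_k).

  Now S^c(e_(k-1)) is the D-weighted mean of S-bar(q) \<ge> S^c(q) = S^c(e_k) over the q \<in> \<frak>S_k
  extending e_(k-1), so S^c(e_k) \<le> S^c(e_(k-1)). Likewise \<sigma>_q turns a permutation with N at
  position k - 1 into an e_k-prefixed one with N among its first k entries, hence at position k;
  this gives S(e_(k-1)) \<le> S(e_k). Altogether S(e_(k-1)) \<le> S(e_k) < S^c(e_k) \<le> S^c(e_(k-1)).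
\<close>

section \<open>Ranks and standardisation\<close>

definition rank :: "nat list \<Rightarrow> nat \<Rightarrow> nat" where
  "rank xs x = card {y \<in> set xs. y \<le> x}"

lemma std_eq_map_rank: "std xs = map (rank xs) xs"
  by (simp add: std_def rank_def)

lemma rank_cong_set: "set xs = set ys \<Longrightarrow> rank xs = rank ys"
  by (simp add: rank_def fun_eq_iff)

lemma rank_mono: "x \<le> y \<Longrightarrow> rank xs x \<le> rank xs y"
  unfolding rank_def by (rule card_mono) auto

lemma rank_strict_mono:
  assumes "y \<in> set xs" "x < y"
  shows "rank xs x < rank xs y"
proof -
  have "{z \<in> set xs. z \<le> x} \<subseteq> {z \<in> set xs. z \<le> y}"
    using assms by auto
  moreover have "y \<notin> {z \<in> set xs. z \<le> x}" "y \<in> {z \<in> set xs. z \<le> y}"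
    using assms by auto
  ultimately have "{z \<in> set xs. z \<le> x} \<subset> {z \<in> set xs. z \<le> y}"
    by blast
  then show ?thesis
    unfolding rank_def by (rule psubset_card_mono[rotated]) simp
qed

lemma rank_less_iff: "x \<in> set xs \<Longrightarrow> y \<in> set xs \<Longrightarrow> rank xs x < rank xs y \<longleftrightarrow> x < y"
  by (meson leI less_le_not_le rank_mono rank_strict_mono)

lemma rank_eq_iff: "x \<in> set xs \<Longrightarrow> y \<in> set xs \<Longrightarrow> rank xs x = rank xs y \<longleftrightarrow> x = y"
  by (metis linorder_neqE_nat rank_strict_mono less_irrefl)

lemma rank_in_range:
  assumes "x \<in> set xs"
  shows "rank xs x \<in> {1..card (set xs)}"
proof -
  have "x \<in> {y \<in> set xs. y \<le> x}"
    using assms by simp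
  then have "1 \<le> rank xs x"
    unfolding rank_def by (auto simp: Suc_le_eq card_gt_0_iff)
  moreover have "rank xs x \<le> card (set xs)"
    unfolding rank_def by (rule card_mono) auto
  ultimately show ?thesis by simp
qed

lemma rank_sorted_nth:
  assumes srt: "sorted_wrt (<) ys" and j: "j < length ys"
  shows "rank ys (ys ! j) = Suc j"
proof -
  have "{y \<in> set ys. y \<le> ys ! j} = (!) ys ` {..j}"
  proof (rule set_eqI, rule iffI)
    fix y assume "y \<in> {y \<in> set ys. y \<le> ys ! j}"
    then obtain i where i: "i < length ys" "y = ys ! i" "ys ! i \<le> ys ! j"
      by (auto simp: in_set_conv_nth)
    have "i \<le> j"
    proof (rule ccontr)
      assume "\<not> i \<le> j"
      then have "ys ! j < ys ! i"
        using sorted_wrt_nth_less[OF srt] i by auto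
      then show False using i by simp
    qed
    then show "y \<in> (!) ys ` {..j}" using i by auto
  next
    fix y assume "y \<in> (!) ys ` {..j}"
    then obtain i where i: "i \<le> j" "y = ys ! i" by auto
    have "ys ! i \<le> ys ! j"
      using i sorted_wrt_nth_less[OF srt, of i j] j by (cases "i = j") auto
    then show "y \<in> {y \<in> set ys. y \<le> ys ! j}" using i j by auto
  qed
  moreover have "inj_on ((!) ys) {..j}"
    using srt j strict_sorted_iff[of ys] by (auto simp: inj_on_def nth_eq_iff_index_eq)
  ultimately show ?thesis
    unfolding rank_def by (simp add: card_image)
qed

lemma std_sorted: "sorted_wrt (<) ys \<Longrightarrow> std ys = [1..<Suc (length ys)]"
  by (rule nth_equalityI) (auto simp: std_eq_map_rank rank_sorted_nth nth_upt simp del: upt_Suc)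

lemma std_map_strict_mono:
  assumes mono: "\<And>x y. x \<in> set xs \<Longrightarrow> y \<in> set xs \<Longrightarrow> x < y \<Longrightarrow> f x < f y"
  shows "std (map f xs) = std xs"
proof -
  have le_iff: "f y \<le> f x \<longleftrightarrow> y \<le> x" if "x \<in> set xs" "y \<in> set xs" for x y
    using mono that by (metis leD le_less linorder_neqE_nat)
  have inj: "inj_on f (set xs)"
    using mono by (metis inj_onI linorder_neqE_nat less_irrefl)
  have "rank (map f xs) (f x) = rank xs x" if "x \<in> set xs" for x
  proof -
    have "{y \<in> set (map f xs). y \<le> f x} = f ` {y \<in> set xs. y \<le> x}"
      using le_iff that by auto
    then show ?thesis
      unfolding rank_def using inj by (simp add: card_image inj_on_subset[OF inj])
  qed
  then show ?thesis by (simp add: std_eq_map_rank)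
qed

lemma sorted_take_std: "sorted_wrt (<) (take k (std xs)) \<longleftrightarrow> sorted_wrt (<) (take k xs)"
proof -
  have "sorted_wrt (<) (take k (std xs)) \<longleftrightarrow> sorted_wrt (\<lambda>x y. rank xs x < rank xs y) (take k xs)"
    by (simp add: std_eq_map_rank take_map sorted_wrt_map)
  also have "\<dots> \<longleftrightarrow> sorted_wrt (<) (take k xs)"
    by (intro iffI; erule sorted_wrt_mono_rel[rotated]) (meson in_set_takeD rank_less_iff)+
  finally show ?thesis .
qed

lemma length_perms: "p \<in> perms m \<Longrightarrow> length p = m"
  by (simp add: perms_def)

lemma in_set_perms: "p \<in> perms m \<Longrightarrow> i \<in> set p \<Longrightarrow> i \<in> {1..m}"
  by (simp add: perms_def)

lemma finite_perms: "finite (perms m)"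
proof -
  have "perms m \<subseteq> {xs. set xs \<subseteq> {1..m} \<and> length xs = m}"
    by (auto simp: perms_def)
  then show ?thesis
    using finite_lists_length_eq[of "{1..m}" m] finite_subset by auto
qed

lemma perms_iff_mset: "p \<in> perms m \<longleftrightarrow> mset p = mset [1..<Suc m]"
proof
  assume "p \<in> perms m"
  moreover have "set [1..<Suc m] = {1..m}"
    by auto
  ultimately show "mset p = mset [1..<Suc m]"
    using set_eq_iff_mset_eq_distinct[of p "[1..<Suc m]"] by (simp add: perms_def)
next
  assume p: "mset p = mset [1..<Suc m]"
  then have "length p = m"
    by (metis length_upt diff_Suc_1 size_mset)
  moreover have "distinct p"
    using p by (metis distinct_upt mset_eq_imp_distinct_iff)
  moreover have "set p = {1..m}"
    using p by (metis atLeastLessThanSuc_atLeastAtMost mset_eq_setD set_upt)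
  ultimately show "p \<in> perms m" by (simp add: perms_def)
qed

lemma std_in_perms:
  assumes "distinct xs"
  shows "std xs \<in> perms (length xs)"
proof -
  have inj: "inj_on (rank xs) (set xs)"
    by (auto simp: inj_on_def rank_eq_iff)
  have "set (std xs) \<subseteq> {1..length xs}"
    using rank_in_range[of _ xs] distinct_card[OF assms] by (auto simp: std_eq_map_rank)
  moreover have "card (set (std xs)) = card {1..length xs}"
    using card_image[OF inj] distinct_card[OF assms] by (simp add: std_eq_map_rank)
  ultimately have "set (std xs) = {1..length xs}"
    by (intro card_subset_eq) auto
  moreover have "distinct (std xs)"
    using assms inj by (simp add: std_eq_map_rank distinct_map)
  ultimately show ?thesis by (simp add: perms_def std_eq_map_rank)
qed

lemma std_perms:
  assumes p: "p \<in> perms m"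
  shows "std p = p"
proof -
  have "rank p x = x" if "x \<in> set p" for x
  proof -
    have "{y \<in> set p. y \<le> x} = {1..x}"
      using that p by (auto simp: perms_def)
    then show ?thesis by (simp add: rank_def)
  qed
  then show ?thesis by (simp add: std_eq_map_rank map_idI)
qed

lemma pat_pat:
  assumes "k \<le> n"
  shows "pat k (pat n \<pi>) = pat k \<pi>"
proof -
  have "pat k (pat n \<pi>) = std (map (rank (take n \<pi>)) (take k (take n \<pi>)))"
    by (simp add: pat_def std_eq_map_rank take_map)
  also have "\<dots> = std (take k (take n \<pi>))"
    by (rule std_map_strict_mono) (meson in_set_takeD rank_strict_mono)
  also have "\<dots> = pat k \<pi>"
    using \<open>k \<le> n\<close> by (simp add: pat_def min_absorb1)
  finally show ?thesis .
qed

lemma sorted_take_if_pat: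
  assumes "pat n \<pi> = t" "k \<le> n" "sorted_wrt (<) (take k t)"
  shows "sorted_wrt (<) (take k \<pi>)"
  using assms sorted_take_std[of k "take n \<pi>"] by (simp add: pat_def min_absorb1)

lemma inc_in_perms: "inc k \<in> perms k"
  by (auto simp: inc_def perms_def)

lemma length_inc [simp]: "length (inc k) = k"
  by (simp add: inc_def)

lemma nth_inc: "i < k \<Longrightarrow> inc k ! i = Suc i"
  by (simp add: inc_def nth_upt del: upt_Suc)

lemma sorted_take_inc: "sorted_wrt (<) (take k (inc k))"
  by (simp add: inc_def del: upt_Suc)

section \<open>The action \<sigma>_q and its inverse\<close>

lemma map_nth_pred_upt: "k \<le> length xs \<Longrightarrow> map (\<lambda>i. xs ! (i - 1)) [1..<Suc k] = take k xs"
  by (rule nth_equalityI) (auto simp: nth_upt simp del: upt_Suc)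

lemma mset_map_nth_pred_perms:
  assumes "q \<in> perms k" "k \<le> length xs"
  shows "mset (map (\<lambda>i. xs ! (i - 1)) q) = mset (take k xs)"
proof -
  have "mset q = mset [1..<Suc k]"
    using assms(1) perms_iff_mset by blast
  then show ?thesis
    by (metis map_nth_pred_upt[OF assms(2)] mset_map)
qed

lemma mset_sigma_act:
  assumes "q \<in> perms k" "k \<le> length xs"
  shows "mset (sigma_act q xs) = mset xs"
proof -
  have "mset (sigma_act q xs) = mset (take k xs) + mset (drop k xs)"
    using mset_map_nth_pred_perms[OF assms] length_perms[OF assms(1)] by (simp add: sigma_act_def)
  then show ?thesis
    by (metis append_take_drop_id mset_append)
qed

lemma length_sigma_act: "q \<in> perms k \<Longrightarrow> k \<le> length xs \<Longrightarrow> length (sigma_act q xs) = length xs"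
  by (metis mset_sigma_act size_mset)

lemma set_sigma_act: "q \<in> perms k \<Longrightarrow> k \<le> length xs \<Longrightarrow> set (sigma_act q xs) = set xs"
  by (metis mset_sigma_act set_mset_mset)

lemma map_sigma_act:
  assumes q: "q \<in> perms k" and k: "k \<le> length xs"
  shows "map f (sigma_act q xs) = sigma_act q (map f xs)"
proof -
  have "map (\<lambda>i. f (xs ! (i - 1))) q = map (\<lambda>i. map f xs ! (i - 1)) q"
    using in_set_perms[OF q] k by (intro map_cong) fastforce+
  then show ?thesis by (simp add: sigma_act_def drop_map)
qed

lemma take_sigma_act:
  assumes q: "q \<in> perms k" and "k \<le> n"
  shows "take n (sigma_act q xs) = sigma_act q (take n xs)"
proof -
  have "map (\<lambda>i. xs ! (i - 1)) q = map (\<lambda>i. take n xs ! (i - 1)) q"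
    using in_set_perms[OF q] \<open>k \<le> n\<close> by (intro map_cong) fastforce+
  then show ?thesis
    using length_perms[OF q] \<open>k \<le> n\<close> by (simp add: sigma_act_def drop_take)
qed

lemma std_sigma_act:
  assumes "q \<in> perms k" "k \<le> length xs"
  shows "std (sigma_act q xs) = sigma_act q (std xs)"
  using rank_cong_set[OF set_sigma_act[OF assms]] map_sigma_act[OF assms]
  by (simp add: std_eq_map_rank)

lemma pat_sigma_act:
  assumes "q \<in> perms k" "k \<le> n" "k \<le> length xs"
  shows "pat n (sigma_act q xs) = sigma_act q (pat n xs)"
  using assms by (simp add: pat_def take_sigma_act std_sigma_act)

lemma nth_sigma_act_less:
  assumes "q \<in> perms k" "i < k"
  shows "sigma_act q xs ! i = xs ! (q ! i - 1)"
  using assms length_perms[OF assms(1)] by (simp add: sigma_act_def nth_append)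

lemma nth_sigma_act_ge:
  assumes "q \<in> perms k" "k \<le> i" "i < length xs"
  shows "sigma_act q xs ! i = xs ! i"
  using assms length_perms[OF assms(1)] by (simp add: sigma_act_def nth_append)

lemma sigma_act_inc:
  assumes q: "q \<in> perms k"
  shows "sigma_act q (inc k) = q"
proof -
  have "map (\<lambda>i. inc k ! (i - 1)) q = map id q"
    using in_set_perms[OF q] nth_inc[of "_ - 1" k] by (intro map_cong) force+
  then show ?thesis
    using length_perms[OF q] by (simp add: sigma_act_def)
qed

definition sort_prefix :: "nat \<Rightarrow> nat list \<Rightarrow> nat list" where
  "sort_prefix k xs = sort (take k xs) @ drop k xs"

lemma mset_sort_prefix: "mset (sort_prefix k xs) = mset xs"
  by (metis append_take_drop_id mset_append mset_sort sort_prefix_def)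

lemma sort_prefix_sigma_act:
  assumes q: "q \<in> perms k" and "k \<le> length xs" and "sorted_wrt (<) (take k xs)"
  shows "sort_prefix k (sigma_act q xs) = xs"
proof -
  have "sort (map (\<lambda>i. xs ! (i - 1)) q) = take k xs"
    by (rule properties_for_sort)
      (use mset_map_nth_pred_perms[OF q assms(2)] assms(3) strict_sorted_iff in auto)
  then show ?thesis
    using length_perms[OF q] by (simp add: sort_prefix_def sigma_act_def)
qed

lemma sort_nth_rank:
  assumes "distinct ys" "x \<in> set ys"
  shows "sort ys ! (rank ys x - 1) = x"
proof -
  have srt: "sorted_wrt (<) (sort ys)"
    using assms(1) by (simp add: strict_sorted_iff)
  obtain j where j: "j < length (sort ys)" "x = sort ys ! j"
    using assms(2) by (metis in_set_conv_nth set_sort)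
  have "rank ys x = Suc j"
    using rank_cong_set[of ys "sort ys"] rank_sorted_nth[OF srt j(1)] j(2) by simp
  then show ?thesis using j by simp
qed

lemma sigma_act_sort_prefix:
  assumes "distinct xs" "k \<le> length xs" and q: "std (take k xs) = q"
  shows "sigma_act q (sort_prefix k xs) = xs"
proof -
  let ?ys = "take k xs"
  have d: "distinct ?ys"
    using assms(1) by simp
  have lq: "length q = k"
    unfolding q[symmetric] std_def using assms(2) by simp
  have ls: "length (sort ?ys) = k"
    using assms(2) by simp
  have "map (\<lambda>i. sort_prefix k xs ! (i - 1)) q = map (\<lambda>i. sort ?ys ! (i - 1)) q"
  proof (rule map_cong[OF refl])
    fix i assume "i \<in> set q"
    then obtain x where "x \<in> set ?ys" "i = rank ?ys x"
      using q by (auto simp: std_eq_map_rank)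
    then have "i - 1 < k"
      using rank_in_range[of x ?ys] distinct_card[OF d] assms(2) by auto
    then show "sort_prefix k xs ! (i - 1) = sort ?ys ! (i - 1)"
      using assms(2) by (simp add: sort_prefix_def nth_append)
  qed
  also have "\<dots> = map (\<lambda>x. sort ?ys ! (rank ?ys x - 1)) ?ys"
    unfolding q[symmetric] std_eq_map_rank by simp
  also have "\<dots> = ?ys"
    using sort_nth_rank[OF d] by (simp add: map_idI)
  finally show ?thesis
    using lq ls by (simp add: sigma_act_def sort_prefix_def)
qed

lemma map_sort_mono:
  assumes "mono f"
  shows "map f (sort ys) = sort (map f ys)"
proof (rule properties_for_sort[symmetric])
  show "mset (map f (sort ys)) = mset (map f ys)"
    by simp
  have "sorted_wrt (\<lambda>x y. f x \<le> f y) (sort ys)"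
    using sorted_sort[of ys] by (rule sorted_wrt_mono_rel[rotated]) (auto intro: monoD[OF assms])
  then show "sorted (map f (sort ys))"
    by (simp add: sorted_map)
qed

lemma std_sort_prefix: "std (sort_prefix k xs) = sort_prefix k (std xs)"
proof -
  have "set (sort_prefix k xs) = set xs"
    by (metis mset_sort_prefix set_mset_mset)
  then have "rank (sort_prefix k xs) = rank xs"
    by (rule rank_cong_set)
  then have "std (sort_prefix k xs) = map (rank xs) (sort (take k xs)) @ map (rank xs) (drop k xs)"
    by (simp add: std_eq_map_rank sort_prefix_def)
  also have "map (rank xs) (sort (take k xs)) = sort (map (rank xs) (take k xs))"
    by (rule map_sort_mono) (simp add: mono_def rank_mono)
  finally show ?thesis
    by (simp add: std_eq_map_rank sort_prefix_def take_map drop_map)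
qed

lemma take_sort_prefix:
  assumes "k \<le> n" "k \<le> length xs"
  shows "take n (sort_prefix k xs) = sort_prefix k (take n xs)"
  using assms by (simp add: sort_prefix_def min_absorb1 drop_take)

lemma pat_sort_prefix:
  assumes "k \<le> n" "k \<le> length xs"
  shows "pat n (sort_prefix k xs) = sort_prefix k (pat n xs)"
  using assms by (simp add: pat_def take_sort_prefix std_sort_prefix)

section \<open>Prefixed permutations and their weights\<close>

definition prefixed :: "nat \<Rightarrow> nat list \<Rightarrow> nat list set" where
  "prefixed m p = {\<pi> \<in> perms m. pat (length p) \<pi> = p}"

lemma finite_prefixed: "finite (prefixed m p)"
  unfolding prefixed_def using finite_perms by simp

lemma length_prefixed: "\<pi> \<in> prefixed m p \<Longrightarrow> length \<pi> = m"
  by (simp add: prefixed_def perms_def)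

lemma Dw_eq_sum_prefixed: "Dw N c \<theta> p = (\<Sum>\<pi>\<in>prefixed N p. \<theta> ^ c \<pi>)"
  by (simp add: Dw_def prefixed_def)

lemma Sw_eq_sum_prefixed:
  "Sw N c \<theta> p = (\<Sum>\<pi>\<in>{\<pi> \<in> prefixed N p. \<pi> ! (length p - 1) = N}. \<theta> ^ c \<pi>) / Dw N c \<theta> p"
proof -
  have "{\<pi> \<in> perms N. pat (length p) \<pi> = p \<and> \<pi> ! (length p - 1) = N}
      = {\<pi> \<in> prefixed N p. \<pi> ! (length p - 1) = N}"
    by (auto simp: prefixed_def)
  then show ?thesis
    unfolding Sw_def by simp
qed

lemma Scont_eq_sum_prefixed:
  "Scont N c \<theta> f p = (\<Sum>q\<in>prefixed (Suc (length p)) p. Dw N c \<theta> q * f q) / Dw N c \<theta> p"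
  by (simp add: Scont_def prefixed_def)

lemma Dw_nonneg: "(\<theta>::real) > 0 \<Longrightarrow> Dw N c \<theta> p \<ge> 0"
  by (simp add: Dw_def sum_nonneg)

lemma Sw_nonneg: "(\<theta>::real) > 0 \<Longrightarrow> Sw N c \<theta> p \<ge> 0"
  by (simp add: Sw_def Dw_def sum_nonneg)

lemma Dw_pos:
  fixes \<theta> :: real
  assumes p: "p \<in> perms m" and "m \<le> N" and "\<theta> > 0"
  shows "Dw N c \<theta> p > 0"
proof -
  let ?\<pi> = "p @ [Suc m..<Suc N]"
  have "?\<pi> \<in> perms N"
    using p \<open>m \<le> N\<close> by (auto simp: perms_def)
  moreover have "pat m ?\<pi> = p"
    using length_perms[OF p] std_perms[OF p] by (simp add: pat_def)
  ultimately have "?\<pi> \<in> prefixed N p"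
    using length_perms[OF p] by (simp add: prefixed_def)
  then show ?thesis
    unfolding Dw_eq_sum_prefixed using \<open>\<theta> > 0\<close> by (intro sum_pos finite_prefixed) auto
qed

lemma sum_prefixed_extensions:
  assumes "length p < N"
  shows "(\<Sum>\<pi>\<in>{\<pi> \<in> prefixed N p. P \<pi>}. h \<pi>)
       = (\<Sum>q\<in>prefixed (Suc (length p)) p. \<Sum>\<pi>\<in>{\<pi> \<in> prefixed N q. P \<pi>}. h \<pi>)"
proof -
  let ?m = "length p"
  let ?S = "{\<pi> \<in> prefixed N p. P \<pi>}" and ?Q = "prefixed (Suc ?m) p"
  have pat_in: "pat (Suc ?m) \<pi> \<in> ?Q" if "\<pi> \<in> ?S" for \<pi>
  proof -
    have "\<pi> \<in> perms N" "pat ?m \<pi> = p"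
      using that by (auto simp: prefixed_def)
    then have "distinct (take (Suc ?m) \<pi>)" "length (take (Suc ?m) \<pi>) = Suc ?m"
      using assms by (auto simp: perms_def)
    then have "pat (Suc ?m) \<pi> \<in> perms (Suc ?m)"
      by (metis std_in_perms pat_def)
    then show ?thesis
      using pat_pat[of ?m "Suc ?m" \<pi>] \<open>pat ?m \<pi> = p\<close> by (simp add: prefixed_def length_perms)
  qed
  have fibre: "{\<pi> \<in> prefixed N q. P \<pi>} = {\<pi> \<in> ?S. pat (Suc ?m) \<pi> = q}" if "q \<in> ?Q" for q
  proof -
    have "length q = Suc ?m" "pat ?m q = p"
      using that by (auto simp: prefixed_def length_perms)
    then show ?thesis
      using pat_pat[of ?m "Suc ?m"] by (auto simp: prefixed_def)
  qed
  have "sum h ?S = (\<Sum>q\<in>?Q. \<Sum>\<pi>\<in>{\<pi> \<in> ?S. pat (Suc ?m) \<pi> = q}. h \<pi>)"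
    by (rule sum.group[symmetric]) (use finite_prefixed finite_subset pat_in in auto)
  also have "\<dots> = (\<Sum>q\<in>?Q. \<Sum>\<pi>\<in>{\<pi> \<in> prefixed N q. P \<pi>}. h \<pi>)"
    using fibre by simp
  finally show ?thesis .
qed

lemma Dw_eq_sum_extensions:
  "length p < N \<Longrightarrow> Dw N c \<theta> p = (\<Sum>q\<in>prefixed (Suc (length p)) p. Dw N c \<theta> q)"
  using sum_prefixed_extensions[where P = "\<lambda>_. True" and h = "\<lambda>\<pi>. \<theta> ^ c \<pi>"]
  by (simp add: Dw_eq_sum_prefixed)

lemma Sbar_eq_max_Sw_Sc:
  assumes "length p < N"
  shows "Sbar N c \<theta> p = max (Sw N c \<theta> p) (Sc N c \<theta> p)"
proof -
  define j where "j = N - Suc (length p)"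
  have "Sbar N c \<theta> q = SbarR j N c \<theta> q" if "q \<in> prefixed (Suc (length p)) p" for q
    using length_prefixed[OF that] by (simp add: Sbar_def j_def)
  then have "Scont N c \<theta> (SbarR j N c \<theta>) p = Sc N c \<theta> p"
    using assms by (simp add: Sc_def Scont_eq_sum_prefixed)
  moreover have "N - length p = Suc j"
    using assms by (simp add: j_def)
  ultimately show ?thesis
    by (simp add: Sbar_def)
qed

lemma length_less_if_negative_prefix:
  assumes "negative_prefix N c \<theta> p" "\<theta> > 0"
  shows "length p < N"
  using assms Sw_nonneg[of \<theta> N c p] by (auto simp: negative_prefix_def Sc_def split: if_splits)

section \<open>Invariance under \<sigma>_q\<close>

lemma bij_betw_sigma_act_prefixed:
  assumes r: "r \<in> perms k" and kt: "k \<le> length t" and tm: "length t \<le> m"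
    and srt: "sorted_wrt (<) (take k t)"
  shows "bij_betw (sigma_act r) (prefixed m t) (prefixed m (sigma_act r t))"
proof (rule bij_betw_byWitness[where f' = "sort_prefix k"])
  have lt: "length (sigma_act r t) = length t"
    using length_sigma_act[OF r kt] .
  show "\<forall>\<pi>\<in>prefixed m t. sort_prefix k (sigma_act r \<pi>) = \<pi>"
  proof
    fix \<pi> assume "\<pi> \<in> prefixed m t"
    then have "length \<pi> = m" "pat (length t) \<pi> = t"
      by (auto simp: prefixed_def perms_def)
    then show "sort_prefix k (sigma_act r \<pi>) = \<pi>"
      using sort_prefix_sigma_act[OF r] sorted_take_if_pat[OF _ kt srt] kt tm by auto
  qed
  show "\<forall>\<pi>\<in>prefixed m (sigma_act r t). sigma_act r (sort_prefix k \<pi>) = \<pi>"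
  proof
    fix \<pi> assume "\<pi> \<in> prefixed m (sigma_act r t)"
    then have l\<pi>: "length \<pi> = m" and p\<pi>: "pat (length t) \<pi> = sigma_act r t" and "distinct \<pi>"
      using lt by (auto simp: prefixed_def perms_def)
    have "std (take k \<pi>) = pat k (pat (length t) \<pi>)"
      using pat_pat[OF kt] by (simp add: pat_def)
    also have "\<dots> = std (sigma_act r (take k t))"
      using p\<pi> take_sigma_act[OF r le_refl] by (simp add: pat_def)
    also have "\<dots> = sigma_act r (inc k)"
      using std_sigma_act[OF r] std_sorted[OF srt] kt by (simp add: inc_def min_absorb2)
    also have "\<dots> = r"
      using sigma_act_inc[OF r] .
    finally show "sigma_act r (sort_prefix k \<pi>) = \<pi>"
      using sigma_act_sort_prefix[OF \<open>distinct \<pi>\<close>] l\<pi> kt tm by simp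
  qed
  show "sigma_act r ` prefixed m t \<subseteq> prefixed m (sigma_act r t)"
  proof
    fix \<rho> assume "\<rho> \<in> sigma_act r ` prefixed m t"
    then obtain \<pi> where \<pi>: "\<pi> \<in> prefixed m t" "\<rho> = sigma_act r \<pi>"
      by auto
    then have "\<pi> \<in> perms m" "length \<pi> = m" "pat (length t) \<pi> = t"
      by (auto simp: prefixed_def perms_def)
    then show "\<rho> \<in> prefixed m (sigma_act r t)"
      using \<pi>(2) mset_sigma_act[OF r] pat_sigma_act[OF r kt] kt tm lt
      by (simp add: prefixed_def perms_iff_mset)
  qed
  show "sort_prefix k ` prefixed m (sigma_act r t) \<subseteq> prefixed m t"
  proof
    fix \<rho> assume "\<rho> \<in> sort_prefix k ` prefixed m (sigma_act r t)"
    then obtain \<pi> where \<pi>: "\<pi> \<in> prefixed m (sigma_act r t)" "\<rho> = sort_prefix k \<pi>"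
      by auto
    then have "\<pi> \<in> perms m" "length \<pi> = m" "pat (length t) \<pi> = sigma_act r t"
      using lt by (auto simp: prefixed_def perms_def)
    then show "\<rho> \<in> prefixed m t"
      using \<pi>(2) mset_sort_prefix[of k \<pi>] pat_sort_prefix[OF kt] sort_prefix_sigma_act[OF r kt srt] kt tm
      by (simp add: prefixed_def perms_iff_mset)
  qed
qed

lemma weight_sigma_act:
  assumes "prefix_equivariant N c" "1 \<le> k" "k \<le> N" "r \<in> perms k"
    and "\<pi> \<in> perms N" "sorted_wrt (<) (take k \<pi>)"
  shows "c (sigma_act r \<pi>) + c (inc k) = c \<pi> + c r"
proof -
  have "int (c \<pi>) - int (c (sigma_act r \<pi>)) = int (c (inc k)) - int (c r)"
    using assms unfolding prefix_equivariant_def by blast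
  then show ?thesis by linarith
qed

lemma sum_weight_sigma_act:
  fixes \<theta> :: real
  assumes pe: "prefix_equivariant N c" and "\<theta> > 0" and k: "1 \<le> k" and r: "r \<in> perms k"
    and kt: "k \<le> length t" and tN: "length t \<le> N" and srt: "sorted_wrt (<) (take k t)"
    and PQ: "\<And>\<pi>. \<pi> \<in> prefixed N t \<Longrightarrow> P (sigma_act r \<pi>) \<longleftrightarrow> Q \<pi>"
  shows "(\<Sum>\<rho>\<in>{\<rho> \<in> prefixed N (sigma_act r t). P \<rho>}. \<theta> ^ c \<rho>)
       = (\<Sum>\<pi>\<in>{\<pi> \<in> prefixed N t. Q \<pi>}. \<theta> ^ c \<pi>) * (\<theta> ^ c r / \<theta> ^ c (inc k))"
proof -
  have "bij_betw (sigma_act r) {\<pi> \<in> prefixed N t. Q \<pi>} {\<rho> \<in> prefixed N (sigma_act r t). P \<rho>}"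
    using bij_betw_sigma_act_prefixed[OF r kt tN srt] PQ by (rule bij_betw_Collect)
  then have "(\<Sum>\<rho>\<in>{\<rho> \<in> prefixed N (sigma_act r t). P \<rho>}. \<theta> ^ c \<rho>)
      = (\<Sum>\<pi>\<in>{\<pi> \<in> prefixed N t. Q \<pi>}. \<theta> ^ c (sigma_act r \<pi>))"
    by (rule sum.reindex_bij_betw[symmetric])
  also have "\<dots> = (\<Sum>\<pi>\<in>{\<pi> \<in> prefixed N t. Q \<pi>}. \<theta> ^ c \<pi> * (\<theta> ^ c r / \<theta> ^ c (inc k)))"
  proof (rule sum.cong[OF refl])
    fix \<pi> assume "\<pi> \<in> {\<pi> \<in> prefixed N t. Q \<pi>}"
    then have "\<pi> \<in> perms N" "pat (length t) \<pi> = t"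
      by (auto simp: prefixed_def)
    then have "c (sigma_act r \<pi>) + c (inc k) = c \<pi> + c r"
      using weight_sigma_act[OF pe k _ r] sorted_take_if_pat[OF _ kt srt] kt tN by simp
    then have "\<theta> ^ c (sigma_act r \<pi>) * \<theta> ^ c (inc k) = \<theta> ^ c \<pi> * \<theta> ^ c r"
      by (metis power_add)
    then show "\<theta> ^ c (sigma_act r \<pi>) = \<theta> ^ c \<pi> * (\<theta> ^ c r / \<theta> ^ c (inc k))"
      using \<open>\<theta> > 0\<close> by (simp add: field_simps)
  qed
  also have "\<dots> = (\<Sum>\<pi>\<in>{\<pi> \<in> prefixed N t. Q \<pi>}. \<theta> ^ c \<pi>) * (\<theta> ^ c r / \<theta> ^ c (inc k))"
    by (rule sum_distrib_right[symmetric])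
  finally show ?thesis .
qed

context
  fixes N k :: nat and c :: "nat list \<Rightarrow> nat" and \<theta> :: real and r :: "nat list"
  assumes pe: "prefix_equivariant N c" and \<theta>: "\<theta> > 0" and k: "1 \<le> k" and r: "r \<in> perms k"
begin

lemma Dw_sigma_act:
  assumes "k \<le> length t" "length t \<le> N" "sorted_wrt (<) (take k t)"
  shows "Dw N c \<theta> (sigma_act r t) = Dw N c \<theta> t * (\<theta> ^ c r / \<theta> ^ c (inc k))"
  using sum_weight_sigma_act[OF pe \<theta> k r assms, of "\<lambda>_. True" "\<lambda>_. True"]
  by (simp add: Dw_eq_sum_prefixed)

lemma Sw_sigma_act:
  assumes kt: "k < length t" and tN: "length t \<le> N" and srt: "sorted_wrt (<) (take k t)"
  shows "Sw N c \<theta> (sigma_act r t) = Sw N c \<theta> t"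
proof -
  let ?a = "\<theta> ^ c r / \<theta> ^ c (inc k)"
  have lt: "length (sigma_act r t) = length t"
    using length_sigma_act[OF r] kt by simp
  have "(\<Sum>\<rho>\<in>{\<rho> \<in> prefixed N (sigma_act r t). \<rho> ! (length t - 1) = N}. \<theta> ^ c \<rho>)
      = (\<Sum>\<pi>\<in>{\<pi> \<in> prefixed N t. \<pi> ! (length t - 1) = N}. \<theta> ^ c \<pi>) * ?a"
    using kt tN nth_sigma_act_ge[OF r, of "length t - 1"] length_prefixed
    by (intro sum_weight_sigma_act[OF pe \<theta> k r _ tN srt]) auto
  moreover have "Dw N c \<theta> (sigma_act r t) = Dw N c \<theta> t * ?a"
    using Dw_sigma_act kt tN srt by simp
  moreover have "?a \<noteq> 0"
    using \<theta> by simp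
  ultimately show ?thesis
    unfolding Sw_eq_sum_prefixed lt by simp
qed

lemma Scont_sigma_act:
  assumes kt: "k \<le> length t" and tN: "length t < N" and srt: "sorted_wrt (<) (take k t)"
    and f: "\<And>u. u \<in> prefixed (Suc (length t)) t \<Longrightarrow> f (sigma_act r u) = f u"
  shows "Scont N c \<theta> f (sigma_act r t) = Scont N c \<theta> f t"
proof -
  let ?a = "\<theta> ^ c r / \<theta> ^ c (inc k)"
  let ?U = "prefixed (Suc (length t)) t"
  have lt: "length (sigma_act r t) = length t"
    using length_sigma_act[OF r kt] .
  have "bij_betw (sigma_act r) ?U (prefixed (Suc (length t)) (sigma_act r t))"
    by (rule bij_betw_sigma_act_prefixed[OF r kt _ srt]) simp
  then have "(\<Sum>q\<in>prefixed (Suc (length t)) (sigma_act r t). Dw N c \<theta> q * f q)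
      = (\<Sum>u\<in>?U. Dw N c \<theta> (sigma_act r u) * f (sigma_act r u))"
    by (rule sum.reindex_bij_betw[symmetric])
  also have "\<dots> = (\<Sum>u\<in>?U. Dw N c \<theta> u * f u * ?a)"
  proof (rule sum.cong[OF refl])
    fix u assume u: "u \<in> ?U"
    then have "length u = Suc (length t)" "pat (length t) u = t"
      by (auto simp: prefixed_def perms_def)
    then have "Dw N c \<theta> (sigma_act r u) = Dw N c \<theta> u * ?a"
      using Dw_sigma_act sorted_take_if_pat[OF _ kt srt] kt tN by simp
    then show "Dw N c \<theta> (sigma_act r u) * f (sigma_act r u) = Dw N c \<theta> u * f u * ?a"
      using f[OF u] by simp
  qed
  also have "\<dots> = (\<Sum>u\<in>?U. Dw N c \<theta> u * f u) * ?a"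
    by (rule sum_distrib_right[symmetric])
  finally show ?thesis
    using Dw_sigma_act[OF kt _ srt] tN \<theta> by (simp add: Scont_eq_sum_prefixed lt)
qed

lemma SbarR_sigma_act:
  "length t + j = N \<Longrightarrow> k < length t \<Longrightarrow> sorted_wrt (<) (take k t)
    \<Longrightarrow> SbarR j N c \<theta> (sigma_act r t) = SbarR j N c \<theta> t"
proof (induction j arbitrary: t)
  case 0
  then show ?case
    using Sw_sigma_act by simp
next
  case (Suc j)
  have "Scont N c \<theta> (SbarR j N c \<theta>) (sigma_act r t) = Scont N c \<theta> (SbarR j N c \<theta>) t"
  proof (rule Scont_sigma_act)
    fix u assume "u \<in> prefixed (Suc (length t)) t"
    then have "length u = Suc (length t)" "pat (length t) u = t"
      by (auto simp: prefixed_def perms_def)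
    then show "SbarR j N c \<theta> (sigma_act r u) = SbarR j N c \<theta> u"
      using Suc.IH Suc.prems sorted_take_if_pat[of "length t" u t k] by simp
  qed (use Suc.prems in auto)
  moreover have "Sw N c \<theta> (sigma_act r t) = Sw N c \<theta> t"
    using Sw_sigma_act Suc.prems by simp
  ultimately show ?case
    by simp
qed

lemma Sc_eq_Sc_inc:
  assumes "k < N"
  shows "Sc N c \<theta> r = Sc N c \<theta> (inc k)"
proof -
  have "Scont N c \<theta> (Sbar N c \<theta>) (sigma_act r (inc k)) = Scont N c \<theta> (Sbar N c \<theta>) (inc k)"
  proof (rule Scont_sigma_act)
    fix u assume "u \<in> prefixed (Suc (length (inc k))) (inc k)"
    then have "length u = Suc k" "pat k u = inc k"
      by (auto simp: prefixed_def perms_def)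
    then show "Sbar N c \<theta> (sigma_act r u) = Sbar N c \<theta> u"
      using SbarR_sigma_act[of u "N - Suc k"] length_sigma_act[OF r, of u]
        sorted_take_if_pat[OF _ le_refl sorted_take_inc] assms
      by (simp add: Sbar_def)
  qed (use assms sorted_take_inc in auto)
  then show ?thesis
    using sigma_act_inc[OF r] length_perms[OF r] assms by (simp add: Sc_def)
qed

end

section \<open>The increasing prefixes e_k and e_(k-1)\<close>

lemma Sc_inc_le_Sc_inc_pred:
  assumes pe: "prefix_equivariant N c" and \<theta>: "\<theta> > 0" and k: "1 \<le> k" "k < N"
  shows "Sc N c \<theta> (inc k) \<le> Sc N c \<theta> (inc (k - 1))"
proof -
  let ?e' = "inc (k - 1)"
  let ?Q = "prefixed k ?e'"
  have Q: "prefixed (Suc (length ?e')) ?e' = ?Q"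
    using k by simp
  have "Sc N c \<theta> (inc k) \<le> Sbar N c \<theta> q" if "q \<in> ?Q" for q
  proof -
    have "q \<in> perms k"
      using that by (simp add: prefixed_def)
    then show ?thesis
      using Sc_eq_Sc_inc[OF pe \<theta> k(1) _ k(2)] Sbar_eq_max_Sw_Sc[of q N] length_perms k by simp
  qed
  then have "Sc N c \<theta> (inc k) * Dw N c \<theta> ?e' \<le> (\<Sum>q\<in>?Q. Dw N c \<theta> q * Sbar N c \<theta> q)"
    using Dw_eq_sum_extensions[of ?e' N] k Q Dw_nonneg[OF \<theta>]
    by (simp add: sum_distrib_left mult.commute sum_mono mult_left_mono)
  moreover have "Dw N c \<theta> ?e' > 0"
    using Dw_pos[OF inc_in_perms _ \<theta>] k by simp
  ultimately show ?thesis
    using k Q by (simp add: Sc_def Scont_eq_sum_prefixed pos_le_divide_eq)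
qed

lemma max_entry_in_increasing_prefix:
  assumes \<pi>: "\<pi> \<in> prefixed N (inc k)" and "k \<le> N" "i < k" "\<pi> ! i = N"
  shows "i = k - 1"
proof (rule ccontr)
  assume "i \<noteq> k - 1"
  then have "i < k - 1"
    using \<open>i < k\<close> by simp
  have "\<pi> \<in> perms N" "pat k \<pi> = inc k"
    using \<pi> by (auto simp: prefixed_def)
  then have "length \<pi> = N" "\<pi> ! (k - 1) \<le> N" "sorted_wrt (<) (take k \<pi>)"
    using sorted_take_if_pat[OF _ le_refl sorted_take_inc] \<open>k \<le> N\<close> \<open>i < k\<close>
    by (auto simp: perms_def)
  then have "\<pi> ! i < \<pi> ! (k - 1)"
    using sorted_wrt_nth_less[of "(<)" "take k \<pi>" i "k - 1"] \<open>i < k - 1\<close> \<open>k \<le> N\<close> by simp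
  then show False
    using \<open>\<pi> ! i = N\<close> \<open>\<pi> ! (k - 1) \<le> N\<close> by simp
qed

text \<open>List indices are 0-based: \<open>\<pi> ! (k - 2) = N\<close> means \<pi>_(k-1) = N, i.e. winnability for e_(k-1).\<close>

lemma winnable_before_weight_le:
  fixes \<theta> :: real
  assumes pe: "prefix_equivariant N c" and \<theta>: "\<theta> > 0" and k: "2 \<le> k" "k \<le> N"
    and q: "q \<in> perms k"
  shows "(\<Sum>\<pi>\<in>{\<pi> \<in> prefixed N q. \<pi> ! (k - 2) = N}. \<theta> ^ c \<pi>)
       \<le> (\<Sum>\<pi>\<in>{\<pi> \<in> prefixed N (inc k). \<pi> ! (k - 1) = N}. \<theta> ^ c \<pi>) * (\<theta> ^ c q / \<theta> ^ c (inc k))"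
proof -
  let ?j = "q ! (k - 2) - 1"
  have "?j < k"
    using in_set_perms[OF q, of "q ! (k - 2)"] length_perms[OF q] k by auto
  have "(\<Sum>\<pi>\<in>{\<pi> \<in> prefixed N q. \<pi> ! (k - 2) = N}. \<theta> ^ c \<pi>)
      = (\<Sum>\<pi>\<in>{\<pi> \<in> prefixed N (inc k). \<pi> ! ?j = N}. \<theta> ^ c \<pi>) * (\<theta> ^ c q / \<theta> ^ c (inc k))"
    using sum_weight_sigma_act[OF pe \<theta> _ q, of "inc k" "\<lambda>\<rho>. \<rho> ! (k - 2) = N" "\<lambda>\<pi>. \<pi> ! ?j = N"]
      nth_sigma_act_less[OF q] sigma_act_inc[OF q] sorted_take_inc k
    by simp
  also have "\<dots> \<le> (\<Sum>\<pi>\<in>{\<pi> \<in> prefixed N (inc k). \<pi> ! (k - 1) = N}. \<theta> ^ c \<pi>) * (\<theta> ^ c q / \<theta> ^ c (inc k))"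
    using max_entry_in_increasing_prefix[OF _ k(2) \<open>?j < k\<close>] finite_prefixed \<theta>
    by (intro mult_right_mono sum_mono2) auto
  finally show ?thesis .
qed

lemma Sw_inc_pred_le_Sw_inc:
  assumes pe: "prefix_equivariant N c" and \<theta>: "\<theta> > 0" and k: "2 \<le> k" "k \<le> N"
  shows "Sw N c \<theta> (inc (k - 1)) \<le> Sw N c \<theta> (inc k)"
proof -
  let ?e = "inc k" and ?e' = "inc (k - 1)"
  let ?Q = "prefixed k ?e'"
  let ?W = "\<lambda>p i. \<Sum>\<pi>\<in>{\<pi> \<in> prefixed N p. \<pi> ! i = N}. \<theta> ^ c \<pi>"
  have Q: "prefixed (Suc (length ?e')) ?e' = ?Q"
    using k by simp
  have De: "Dw N c \<theta> ?e > 0" and De': "Dw N c \<theta> ?e' > 0"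
    using Dw_pos[OF inc_in_perms _ \<theta>] k by auto
  have scale: "\<theta> ^ c q / \<theta> ^ c ?e = Dw N c \<theta> q / Dw N c \<theta> ?e" if "q \<in> ?Q" for q
  proof -
    have "q \<in> perms k"
      using that by (simp add: prefixed_def)
    then show ?thesis
      using Dw_sigma_act[OF pe \<theta> _ \<open>q \<in> perms k\<close>, of "inc k"] sigma_act_inc sorted_take_inc k De
      by (simp add: field_simps)
  qed
  have "?W ?e' (k - 2) = (\<Sum>q\<in>?Q. ?W q (k - 2))"
    using sum_prefixed_extensions[of ?e' N "\<lambda>\<pi>. \<theta> ^ c \<pi>" "\<lambda>\<pi>. \<pi> ! (k - 2) = N"] k Q by simp
  also have "\<dots> \<le> (\<Sum>q\<in>?Q. ?W ?e (k - 1) * (Dw N c \<theta> q / Dw N c \<theta> ?e))"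
  proof (rule sum_mono)
    fix q assume "q \<in> ?Q"
    then have "q \<in> perms k"
      by (simp add: prefixed_def)
    from winnable_before_weight_le[OF pe \<theta> k this]
    show "?W q (k - 2) \<le> ?W ?e (k - 1) * (Dw N c \<theta> q / Dw N c \<theta> ?e)"
      unfolding scale[OF \<open>q \<in> ?Q\<close>] .
  qed
  also have "\<dots> = Sw N c \<theta> ?e * Dw N c \<theta> ?e'"
    using Dw_eq_sum_extensions[of ?e' N] k Q
    by (simp add: Sw_eq_sum_prefixed sum_distrib_left)
  finally show ?thesis
    using De' k by (simp add: Sw_eq_sum_prefixed numeral_2_eq_2 pos_divide_le_eq)
qed

theorem corollary3p7:
  fixes N k :: nat and c :: "nat list \<Rightarrow> nat" and \<theta> :: real
  assumes "prefix_equivariant N c"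
    and "\<theta> > 0"
    and "2 \<le> k" and "k \<le> N"
    and "negative_prefix N c \<theta> (inc k)"
  shows "negative_prefix N c \<theta> (inc (k - 1))"
proof -
  have "k < N"
    using length_less_if_negative_prefix[OF assms(5,2)] by simp
  have "Sw N c \<theta> (inc (k - 1)) \<le> Sw N c \<theta> (inc k)"
    using Sw_inc_pred_le_Sw_inc assms(1-4) .
  moreover have "Sw N c \<theta> (inc k) < Sc N c \<theta> (inc k)"
    using assms(5) by (simp add: negative_prefix_def)
  moreover have "Sc N c \<theta> (inc k) \<le> Sc N c \<theta> (inc (k - 1))"
    using Sc_inc_le_Sc_inc_pred assms(1-3) \<open>k < N\<close> by simp
  ultimately show ?thesis
    by (simp add: negative_prefix_def)
qed

end
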